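(* Let $N\ge1$ and $L=\sum_{i=0}^N a_i(x)\partial_x^i$ with $a_i(x)=\sum_{j=0}^i a_{i,j}x^j$ complex polynomials, $a_0\equiv0$, $a_i\equiv0$ for $i>N$, and let $\delta_n^{(k)}=\sum_{i=k}^n\binom ni i!\,a_{i,i-k}$ ($0\le k\le n$). Suppose there are $\lambda_n\in\mathbb{C}$ ($n\ge0$, $\lambda_0=0$, $\lambda_n\notin\{0,\lambda_1,\ldots,\lambda_{n-1}\}$ for $n\ge1$) and monic polynomials $P_n(x)=\sum_{i=0}^nb_{n,i}x^i$ of degree $n$ with $\sum_{i=1}^Na_i\partial_x^iP_n=\lambda_nP_n$ for all $n\ge0$ (convention $b_{m,m}=1$, $b_{m,l}=0$ for $l>m$). Then for every $n\ge1$ and $k=1,\ldots,n$, $(-1)^k\delta_n^{(k)}$ equals the determinant of the $k\times k$ matrix $G$ with first row $G_{1,c}=(\lambda_{n-k}-\lambda_{n-k+c})\,b_{n-k+c,\,n-k}$ ($1\le c\le k$) and, for rows $2\le\rho\le k$, $G_{\rho,c}=b_{n-k+c,\;n-k+\rho-1}$.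
   Context: $\partial_x^i$ denotes the $i$-th derivative in $x$. With the stated convention, rows $2,\ldots,k$ of $G$ have ones on the subdiagonal and zeros below it. *)

theory Defs
  imports "HOL-Computational_Algebra.Polynomial" "Jordan_Normal_Form.Determinant"
begin

definition coeff_poly :: "(nat \<Rightarrow> nat \<Rightarrow> complex) \<Rightarrow> nat \<Rightarrow> complex poly" where
  "coeff_poly a i = (\<Sum>j\<le>i. monom (a i j) j)"

definition P_poly :: "(nat \<Rightarrow> nat \<Rightarrow> complex) \<Rightarrow> nat \<Rightarrow> complex poly" where
  "P_poly b n = (\<Sum>i\<le>n. monom (b n i) i)"

definition delta :: "(nat \<Rightarrow> nat \<Rightarrow> complex) \<Rightarrow> nat \<Rightarrow> nat \<Rightarrow> complex" where
  "delta a n k = (\<Sum>i=k..n. of_nat (n choose i) * fact i * a i (i - k))"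

text \<open>The k x k matrix G (0-indexed: row r, column c correspond to rho = r+1, c+1).\<close>
definition Gmat :: "(nat \<Rightarrow> complex) \<Rightarrow> (nat \<Rightarrow> nat \<Rightarrow> complex) \<Rightarrow> nat \<Rightarrow> nat \<Rightarrow> complex mat" where
  "Gmat lam b n k = mat k k (\<lambda>(r, c).
     if r = 0 then (lam (n - k) - lam (n - k + (c + 1))) * b (n - k + (c + 1)) (n - k)
     else b (n - k + (c + 1)) (n - k + r))"

end

theory Submission
  imports Defs
begin

text \<open>Comparing the coefficients of \<open>x^t\<close> in \<open>L P_n = \<lambda>_n P_n\<close> gives
  \<open>\<Sum>s=t..n. b_{n,s} \<delta>_s^{(s-t)} = \<lambda>_n b_{n,t}\<close>; for \<open>t = n\<close> this says \<open>\<delta>_m^{(0)} = \<lambda>_m\<close>.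
  Applied to \<open>P_{n-k+c}\<close> with \<open>t = n-k\<close>, it shows that the first row of \<open>G\<close> equals
  \<open>-\<Sum>r=1..k-1. \<delta>_{n-k+r}^{(r)} (b_{n-k+c,n-k+r})_c\<close>, i.e. a combination of the other rows,
  minus \<open>\<delta>_n^{(k)}\<close> times the last unit vector. Expanding along the first row, the other rows
  contribute nothing (alien cofactors), and what remains is \<open>-\<delta>_n^{(k)}\<close> times the cofactor
  of the last column, whose minor is unitriangular.\<close>

lemma higher_pderiv_monom_binomial:
  fixes c :: "'a :: {comm_semiring_1, semiring_no_zero_divisors, semiring_char_0}"
  shows "(pderiv ^^ i) (monom c s) = monom (of_nat (s choose i) * fact i * c) (s - i)"
proof (induction i)
  case 0
  show ?case by simp
next
  case (Suc i)
  have "(s - i) * (s choose i) = Suc i * (s choose Suc i)"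
    by (simp only: binomial_absorb_comp binomial_absorption)
  then have "of_nat (s - i) * (of_nat (s choose i) * fact i * c)
      = of_nat (s choose Suc i) * fact (Suc i) * c"
    by (metis (mono_tags, lifting) fact_Suc mult.assoc mult.commute of_nat_mult)
  with Suc show ?case
    by (simp add: pderiv_monom del: fact_Suc)
qed

lemma coeff_coeff_poly: "coeff (coeff_poly a i) l = (if l \<le> i then a i l else 0)"
  unfolding coeff_poly_def by (simp add: coeff_sum coeff_monom)

lemma coeff_P_poly: "coeff (P_poly b n) l = (if l \<le> n then b n l else 0)"
  unfolding P_poly_def by (simp add: coeff_sum coeff_monom)

lemma coeff_poly_eq_0_iff: "coeff_poly a i = 0 \<longleftrightarrow> (\<forall>j\<le>i. a i j = 0)"
  by (auto simp: poly_eq_iff coeff_coeff_poly)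

definition diff_op :: "(nat \<Rightarrow> nat \<Rightarrow> complex) \<Rightarrow> nat \<Rightarrow> complex poly \<Rightarrow> complex poly" where
  "diff_op a N p = (\<Sum>i=1..N. coeff_poly a i * (pderiv ^^ i) p)"

lemma diff_op_sum: "diff_op a N (sum f A) = (\<Sum>x\<in>A. diff_op a N (f x))"
  unfolding diff_op_def higher_pderiv_sum sum_distrib_left by (rule sum.swap)

lemma coeff_diff_op_monom:
  assumes a0: "coeff_poly a 0 = 0" and aN: "\<And>i. N < i \<Longrightarrow> coeff_poly a i = 0"
  shows "coeff (diff_op a N (monom c s)) t = (if t \<le> s then c * delta a s (s - t) else 0)"
proof -
  define T where "T i = of_nat (s choose i) * fact i * c *
      (if s \<le> t + i \<and> t \<le> s then a i (t + i - s) else 0)" for i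
  have coeff_term: "coeff (coeff_poly a i * (pderiv ^^ i) (monom c s)) t = T i" for i
    by (cases "i \<le> s")
      (auto simp: T_def higher_pderiv_monom_binomial mult.commute[of _ "monom _ _"]
        coeff_monom_mult coeff_coeff_poly)
  have T_outside: "T i = 0" if "i = 0 \<or> N < i" for i
    using that a0 aN[of i] by (auto simp: T_def coeff_poly_eq_0_iff)
  have "coeff (diff_op a N (monom c s)) t = sum T {1..N}"
    by (simp add: diff_op_def coeff_sum coeff_term)
  also have "\<dots> = sum T {..N + s}"
    by (rule sum.mono_neutral_left) (auto intro: T_outside)
  also have "\<dots> = sum T {s - t..s}"
    by (rule sum.mono_neutral_right) (auto simp: T_def)
  also have "\<dots> = (if t \<le> s then c * delta a s (s - t) else 0)"
    unfolding delta_def sum_distrib_left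
    by (auto intro!: sum.cong sum.neutral simp: T_def add.commute)
  finally show ?thesis .
qed

lemma coeff_diff_op_P_poly:
  assumes "coeff_poly a 0 = 0" and "\<And>i. N < i \<Longrightarrow> coeff_poly a i = 0"
  shows "coeff (diff_op a N (P_poly b n)) t = (\<Sum>s=t..n. b n s * delta a s (s - t))"
proof -
  have "coeff (diff_op a N (P_poly b n)) t
      = (\<Sum>s\<le>n. if t \<le> s then b n s * delta a s (s - t) else 0)"
    unfolding P_poly_def diff_op_sum
    by (auto simp: coeff_sum coeff_diff_op_monom[OF assms] intro: sum.cong)
  also have "\<dots> = (\<Sum>s=t..n. b n s * delta a s (s - t))"
    by (subst sum.inter_filter[symmetric]) (auto intro: sum.cong)
  finally show ?thesis .
qed

lemma det_row_combination:
  fixes A :: "'a :: comm_ring_1 mat"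
  assumes A: "A \<in> carrier_mat n n" and i: "i < n"
    and row_i: "\<And>j. j < n \<Longrightarrow> A $$ (i, j) = (\<Sum>r\<in>{0..<n} - {i}. w r * A $$ (r, j)) + v j"
  shows "det A = (\<Sum>j<n. v j * cofactor A i j)"
proof -
  define row_replaced where
    "row_replaced u = mat n n (\<lambda>(r, j). if r = i then u j else A $$ (r, j))" for u
  have carrier: "row_replaced u \<in> carrier_mat n n" for u
    by (simp add: row_replaced_def)
  have "mat_delete (row_replaced u) i j = mat_delete A i j" for u j
    unfolding mat_delete_def row_replaced_def by (rule eq_matI) (use A in auto)
  then have det_row_replaced: "det (row_replaced u) = (\<Sum>j<n. u j * cofactor A i j)" for u
    using laplace_expansion_row[OF carrier i] by (simp add: cofactor_def row_replaced_def i)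
  have alien_cofactors: "(\<Sum>j<n. A $$ (r, j) * cofactor A i j) = 0"
    if r: "r \<in> {0..<n} - {i}" for r
  proof -
    have "det (row_replaced (\<lambda>j. A $$ (r, j))) = 0"
      by (rule det_identical_rows[OF carrier, of i r])
        (use r i in \<open>auto intro!: eq_vecI simp: row_replaced_def\<close>)
    then show ?thesis
      by (simp add: det_row_replaced)
  qed
  have "det A = (\<Sum>j<n. A $$ (i, j) * cofactor A i j)"
    by (rule laplace_expansion_row[OF A i])
  also have "\<dots> = (\<Sum>r\<in>{0..<n} - {i}. w r * (\<Sum>j<n. A $$ (r, j) * cofactor A i j))
      + (\<Sum>j<n. v j * cofactor A i j)"
    by (simp add: row_i ring_distribs sum.distrib sum_distrib_left sum_distrib_right mult.assoc
        flip: sum.swap[of _ "{0..<n} - {i}"])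
  also have "\<dots> = (\<Sum>j<n. v j * cofactor A i j)"
    by (simp add: alien_cofactors)
  finally show ?thesis .
qed

lemma Gmat_carrier: "Gmat lam b n k \<in> carrier_mat k k"
  by (simp add: Gmat_def)

locale eigenpolynomial_family =
  fixes N :: nat and a :: "nat \<Rightarrow> nat \<Rightarrow> complex"
    and lam :: "nat \<Rightarrow> complex" and b :: "nat \<Rightarrow> nat \<Rightarrow> complex"
  assumes coeff_poly_0: "coeff_poly a 0 = 0"
    and coeff_poly_above: "\<And>i. N < i \<Longrightarrow> coeff_poly a i = 0"
    and monic: "\<And>m. b m m = 1"
    and b_above: "\<And>m l. m < l \<Longrightarrow> b m l = 0"
    and eigen: "\<And>n. diff_op a N (P_poly b n) = smult (lam n) (P_poly b n)"
begin

lemma delta_sum_eq_lam: "t \<le> n \<Longrightarrow> (\<Sum>s=t..n. b n s * delta a s (s - t)) = lam n * b n t"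
  using arg_cong[OF eigen[of n], of "\<lambda>p. coeff p t"]
  by (simp add: coeff_diff_op_P_poly[OF coeff_poly_0 coeff_poly_above] coeff_P_poly)

lemma delta_0: "delta a m 0 = lam m"
  using delta_sum_eq_lam[of m m] by (simp add: monic)

lemma lam_gap_eq_delta_sum:
  assumes "c \<le> K"
  shows "(lam m - lam (m + c)) * b (m + c) m
    = - (\<Sum>r=1..K. delta a (m + r) r * b (m + c) (m + r))"
proof -
  have "lam (m + c) * b (m + c) m = (\<Sum>s=0+m..c+m. b (m + c) s * delta a s (s - m))"
    by (simp add: delta_sum_eq_lam add.commute)
  also have "\<dots> = (\<Sum>r=0..c. delta a (m + r) r * b (m + c) (m + r))"
    by (simp only: sum.shift_bounds_cl_nat_ivl) (simp add: add.commute mult.commute)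
  also have "\<dots> = lam m * b (m + c) m + (\<Sum>r=1..c. delta a (m + r) r * b (m + c) (m + r))"
    by (simp add: sum.atLeast_Suc_atMost delta_0)
  also have "(\<Sum>r=1..c. delta a (m + r) r * b (m + c) (m + r))
      = (\<Sum>r=1..K. delta a (m + r) r * b (m + c) (m + r))"
    by (rule sum.mono_neutral_left) (use assms in \<open>auto simp: b_above\<close>)
  finally show ?thesis
    by (simp add: algebra_simps)
qed

lemma Gmat_first_row:
  assumes "k \<le> n" and j: "j < k"
  shows "Gmat lam b n k $$ (0, j) =
    (\<Sum>r\<in>{0..<k} - {0}. - delta a (n - k + r) r * Gmat lam b n k $$ (r, j))
    + (if j = k - 1 then - delta a n k else 0)"
proof -
  define m where "m = n - k"
  have n: "n = m + k"
    using assms by (simp add: m_def)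
  define f where "f r = delta a (m + r) r * b (m + (j + 1)) (m + r)" for r
  have split_top: "{1..k} = insert k ({0..<k} - {0})"
    using j by auto
  have "Gmat lam b n k $$ (0, j) = - (\<Sum>r=1..k. f r)"
    using j lam_gap_eq_delta_sum[of "j + 1" k m] by (simp add: Gmat_def n f_def)
  also have "(\<Sum>r=1..k. f r) = (\<Sum>r\<in>{0..<k} - {0}. f r) + f k"
    unfolding split_top by simp
  also have "f k = (if j = k - 1 then delta a n k else 0)"
    using j by (auto simp: f_def n monic b_above)
  also have "(\<Sum>r\<in>{0..<k} - {0}. f r)
      = (\<Sum>r\<in>{0..<k} - {0}. delta a (n - k + r) r * Gmat lam b n k $$ (r, j))"
    by (rule sum.cong) (use j in \<open>auto simp: f_def Gmat_def n\<close>)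
  finally show ?thesis
    by (simp add: sum_negf)
qed

lemma det_Gmat_minor: "det (mat_delete (Gmat lam b n k) 0 (k - 1)) = 1"
proof -
  define D where "D = mat_delete (Gmat lam b n k) 0 (k - 1)"
  have D: "D \<in> carrier_mat (k - 1) (k - 1)"
    unfolding D_def using Gmat_carrier by (rule mat_delete_carrier)
  have D_index: "D $$ (i, j) = b (n - k + (j + 1)) (n - k + Suc i)"
    if "i < k - 1" "j < k - 1" for i j
    using that by (simp add: D_def mat_delete_def Gmat_def)
  have "upper_triangular D"
    using D by (auto simp: upper_triangular_def D_index b_above)
  then have "det D = prod_list (diag_mat D)"
    using D by (rule det_upper_triangular)
  also have "diag_mat D = replicate (k - 1) 1"
    using D by (auto simp: diag_mat_def D_index monic intro!: nth_equalityI)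
  finally show ?thesis
    by (simp add: D_def)
qed

lemma det_Gmat:
  assumes "1 \<le> k" "k \<le> n"
  shows "det (Gmat lam b n k) = (-1) ^ k * delta a n k"
proof -
  let ?G = "Gmat lam b n k"
  have "det ?G = (\<Sum>j<k. (if j = k - 1 then - delta a n k else 0) * cofactor ?G 0 j)"
    using assms by (intro det_row_combination[OF Gmat_carrier _ Gmat_first_row[OF assms(2)]]) auto
  also have "\<dots> = - delta a n k * cofactor ?G 0 (k - 1)"
    using assms by (simp add: if_distrib[of "\<lambda>x. x * _"] sum.delta cong: if_cong)
  also have "\<dots> = - delta a n k * (-1) ^ (k - 1)"
    unfolding cofactor_def det_Gmat_minor by simp
  also have "\<dots> = (-1) ^ k * delta a n k"
    using assms by (cases k) auto
  finally show ?thesis .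
qed

end

theorem lemma2:
  fixes N :: nat and a :: "nat \<Rightarrow> nat \<Rightarrow> complex"
    and lam :: "nat \<Rightarrow> complex" and b :: "nat \<Rightarrow> nat \<Rightarrow> complex"
  assumes N1: "N \<ge> 1"
    and a0: "coeff_poly a 0 = 0"
    and aN: "\<And>i. i > N \<Longrightarrow> coeff_poly a i = 0"
    and lam0: "lam 0 = 0"
    and lam_distinct: "\<And>n m. n \<ge> 1 \<Longrightarrow> m < n \<Longrightarrow> lam n \<noteq> lam m"
    and monic: "\<And>m. b m m = 1"
    and bzero: "\<And>m l. l > m \<Longrightarrow> b m l = 0"
    and eig: "\<And>n. (\<Sum>i=1..N. coeff_poly a i * (pderiv ^^ i) (P_poly b n))
                    = smult (lam n) (P_poly b n)"
  shows "\<forall>n\<ge>1. \<forall>k\<in>{1..n}. (-1) ^ k * delta a n k = det (Gmat lam b n k)"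
proof -
  \<comment> \<open>\<open>N1\<close>, \<open>lam0\<close> and \<open>lam_distinct\<close> only serve to make the \<open>P_n\<close> exist uniquely.\<close>
  interpret eigenpolynomial_family N a lam b
    using a0 aN monic bzero eig by unfold_locales (simp_all add: diff_op_def)
  show ?thesis
    by (auto simp: det_Gmat)
qed

end
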